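(* Let $G$ be a nontrivial graph of order $n$, not isomorphic to $K_n$, such that $\beta_p(G)=n-h$ and $\tau(G)=\tau>\frac{n}{2}$. Let $W$ be its $\tau$-set. Then $n-2h\le\tau\le n-h-1$ if and only if $G[W]\cong K_\tau$.
   Context: All graphs are finite, simple, undirected and connected. Two vertices $u,v$ are twins if $N(u)\setminus\{v\}=N(v)\setminus\{u\}$; the twin number $\tau(G)$ is the maximum cardinality of an equivalence class of the twin relation; a $\tau$-set is a set of pairwise twin vertices of cardinality $\tau(G)$. For a partition $\Pi=\{S_1,\dots,S_k\}$ of $V(G)$, $r(u|\Pi)=(d(u,S_1),\dots,d(u,S_k))$ with $d(u,S)=\min_{w\in S}d(u,w)$; $\Pi$ is locating if $r(u|\Pi)\ne r(v|\Pi)$ for all distinct $u,v$; $\beta_p(G)$ is the minimum size of a locating partition. *)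

theory Defs
  imports Main
begin

fun reach :: "('a \<Rightarrow> 'a \<Rightarrow> bool) \<Rightarrow> nat \<Rightarrow> 'a \<Rightarrow> 'a \<Rightarrow> bool" where
  "reach E 0 u v = (u = v)"
| "reach E (Suc k) u v = (\<exists>w. E u w \<and> reach E k w v)"

definition graph :: "'a set \<Rightarrow> ('a \<Rightarrow> 'a \<Rightarrow> bool) \<Rightarrow> bool" where
  "graph V E \<longleftrightarrow> finite V \<and> V \<noteq> {}
     \<and> (\<forall>u v. E u v \<longrightarrow> u \<in> V \<and> v \<in> V)
     \<and> (\<forall>u v. E u v \<longrightarrow> E v u)
     \<and> (\<forall>u. \<not> E u u)"

definition connected_graph :: "'a set \<Rightarrow> ('a \<Rightarrow> 'a \<Rightarrow> bool) \<Rightarrow> bool" where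
  "connected_graph V E \<longleftrightarrow> graph V E \<and> (\<forall>u\<in>V. \<forall>v\<in>V. \<exists>k. reach E k u v)"

definition gdist :: "('a \<Rightarrow> 'a \<Rightarrow> bool) \<Rightarrow> 'a \<Rightarrow> 'a \<Rightarrow> nat" where
  "gdist E u v = (LEAST k. reach E k u v)"

definition set_dist :: "('a \<Rightarrow> 'a \<Rightarrow> bool) \<Rightarrow> 'a \<Rightarrow> 'a set \<Rightarrow> nat" where
  "set_dist E u S = Min ((gdist E u) ` S)"

definition nbhd :: "'a set \<Rightarrow> ('a \<Rightarrow> 'a \<Rightarrow> bool) \<Rightarrow> 'a \<Rightarrow> 'a set" where
  "nbhd V E u = {w \<in> V. E u w}"

definition twins :: "'a set \<Rightarrow> ('a \<Rightarrow> 'a \<Rightarrow> bool) \<Rightarrow> 'a \<Rightarrow> 'a \<Rightarrow> bool" where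
  "twins V E u v \<longleftrightarrow> nbhd V E u - {v} = nbhd V E v - {u}"

definition twin_class :: "'a set \<Rightarrow> ('a \<Rightarrow> 'a \<Rightarrow> bool) \<Rightarrow> 'a \<Rightarrow> 'a set" where
  "twin_class V E u = {v \<in> V. twins V E u v}"

definition twin_number :: "'a set \<Rightarrow> ('a \<Rightarrow> 'a \<Rightarrow> bool) \<Rightarrow> nat" where
  "twin_number V E = Max ((\<lambda>u. card (twin_class V E u)) ` V)"

definition tau_set :: "'a set \<Rightarrow> ('a \<Rightarrow> 'a \<Rightarrow> bool) \<Rightarrow> 'a set \<Rightarrow> bool" where
  "tau_set V E W \<longleftrightarrow> W \<subseteq> V \<and> (\<forall>u\<in>W. \<forall>v\<in>W. twins V E u v)
      \<and> card W = twin_number V E"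

definition is_partition :: "'a set \<Rightarrow> 'a set set \<Rightarrow> bool" where
  "is_partition V P \<longleftrightarrow> (\<Union>P = V) \<and> {} \<notin> P
      \<and> (\<forall>A\<in>P. \<forall>B\<in>P. A \<noteq> B \<longrightarrow> A \<inter> B = {})"

text \<open>r(u|P) \<noteq> r(v|P) means some coordinate d(.,S) differs.\<close>
definition locating_partition :: "'a set \<Rightarrow> ('a \<Rightarrow> 'a \<Rightarrow> bool) \<Rightarrow> 'a set set \<Rightarrow> bool" where
  "locating_partition V E P \<longleftrightarrow> is_partition V P \<and>
     (\<forall>u\<in>V. \<forall>v\<in>V. u \<noteq> v \<longrightarrow> (\<exists>S\<in>P. set_dist E u S \<noteq> set_dist E v S))"

definition partition_dimension :: "'a set \<Rightarrow> ('a \<Rightarrow> 'a \<Rightarrow> bool) \<Rightarrow> nat" where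
  "partition_dimension V E = (LEAST k. \<exists>P. locating_partition V E P \<and> card P = k)"

definition complete_on :: "('a \<Rightarrow> 'a \<Rightarrow> bool) \<Rightarrow> 'a set \<Rightarrow> bool" where
  "complete_on E W \<longleftrightarrow> (\<forall>u\<in>W. \<forall>v\<in>W. u \<noteq> v \<longrightarrow> E u v)"

end

theory Submission
  imports Defs
begin

text \<open>A maximum twin class W is a clique or an independent set, and every vertex outside W sees
  either all of W or none of it. Distinct twins lie in distinct classes of a locating partition,
  so \<beta>_p \<ge> \<tau>, with strict inequality when W is a clique (a neighbour of W would otherwise
  share the distance vector of a twin). Conversely, as \<tau> > n/2 the outside vertices can be
  paired injectively with vertices of W. Pairs and singletons give a locating partition with \<tau>
  classes when W is independent; when W is a clique one first sets aside, as singletons, a set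
  of witnesses distinguishing the outside vertices from W, of at most half their number by Ore's
  domination argument, which gives 2\<beta>_p \<le> n + \<tau>. With
  \<beta>_p = n - h these are exactly the two bounds on \<tau>.\<close>

lemma set_dist_le: "finite T \<Longrightarrow> t \<in> T \<Longrightarrow> set_dist E x T \<le> gdist E x t"
  unfolding set_dist_def by simp

lemma set_dist_attained: "finite T \<Longrightarrow> T \<noteq> {} \<Longrightarrow> \<exists>t\<in>T. set_dist E x T = gdist E x t"
  unfolding set_dist_def using Min_in[of "gdist E x ` T"] by fastforce

lemma partition_dimension_le:
  "locating_partition V E P \<Longrightarrow> partition_dimension V E \<le> card P"
  unfolding partition_dimension_def by (rule Least_le) blast

lemma partition_dimension_attained:
  "locating_partition V E P \<Longrightarrow> \<exists>Q. locating_partition V E Q \<and> card Q = partition_dimension V E"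
  unfolding partition_dimension_def by (rule LeastI_ex) blast

locale connected_simple_graph =
  fixes V :: "'a set" and E :: "'a \<Rightarrow> 'a \<Rightarrow> bool"
  assumes connected: "connected_graph V E"
begin

lemma finite_V: "finite V"
  and edge_in_V: "E u v \<Longrightarrow> u \<in> V \<and> v \<in> V"
  and edge_sym: "E u v \<Longrightarrow> E v u"
  and no_loop: "\<not> E u u"
  and reach_exists: "u \<in> V \<Longrightarrow> v \<in> V \<Longrightarrow> \<exists>k. reach E k u v"
  using connected unfolding connected_graph_def graph_def by blast+

lemma reach_gdist: "u \<in> V \<Longrightarrow> v \<in> V \<Longrightarrow> reach E (gdist E u v) u v"
  unfolding gdist_def using reach_exists by (meson LeastI_ex)

lemma gdist_le: "reach E k u v \<Longrightarrow> gdist E u v \<le> k"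
  unfolding gdist_def by (rule Least_le)

lemma gdist_eq_0_iff: "u \<in> V \<Longrightarrow> v \<in> V \<Longrightarrow> gdist E u v = 0 \<longleftrightarrow> u = v"
  using reach_gdist[of u v] gdist_le[of 0 u v] by auto

lemma gdist_eq_1_iff: "u \<in> V \<Longrightarrow> v \<in> V \<Longrightarrow> gdist E u v = 1 \<longleftrightarrow> E u v"
  using reach_gdist[of u v] gdist_le[of 1 u v] gdist_eq_0_iff[of u v] no_loop by fastforce

lemma set_dist_eq_0_iff:
  assumes "x \<in> V" "T \<subseteq> V" "T \<noteq> {}"
  shows "set_dist E x T = 0 \<longleftrightarrow> x \<in> T"
proof
  have "finite T" using assms finite_V finite_subset by blast
  assume "set_dist E x T = 0"
  then obtain t where "t \<in> T" "gdist E x t = 0"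
    using set_dist_attained[OF \<open>finite T\<close> \<open>T \<noteq> {}\<close>] by metis
  then show "x \<in> T" using gdist_eq_0_iff assms by blast
next
  have "finite T" using assms finite_V finite_subset by blast
  assume "x \<in> T"
  then have "set_dist E x T \<le> gdist E x x" using set_dist_le[OF \<open>finite T\<close>] by blast
  then show "set_dist E x T = 0" using gdist_eq_0_iff[OF assms(1,1)] by simp
qed

lemma set_dist_eq_1_iff:
  assumes "x \<in> V" "T \<subseteq> V" "T \<noteq> {}" "x \<notin> T"
  shows "set_dist E x T = 1 \<longleftrightarrow> (\<exists>t\<in>T. E x t)"
proof
  have "finite T" using assms finite_V finite_subset by blast
  assume "set_dist E x T = 1"
  then obtain t where "t \<in> T" "gdist E x t = 1"
    using set_dist_attained[OF \<open>finite T\<close> \<open>T \<noteq> {}\<close>] by metis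
  then show "\<exists>t\<in>T. E x t" using gdist_eq_1_iff assms by blast
next
  have "finite T" using assms finite_V finite_subset by blast
  assume "\<exists>t\<in>T. E x t"
  then obtain t where "t \<in> T" "gdist E x t = 1" using gdist_eq_1_iff assms by blast
  then have "set_dist E x T \<le> 1" using set_dist_le[OF \<open>finite T\<close>] by metis
  moreover have "set_dist E x T \<noteq> 0" using set_dist_eq_0_iff assms by blast
  ultimately show "set_dist E x T = 1" by linarith
qed

lemma set_dist_differs_if_adjacency_differs:
  assumes "x \<in> V" "y \<in> V" "T \<subseteq> V" "T \<noteq> {}" "x \<notin> T" "y \<notin> T"
    and "(\<exists>t\<in>T. E x t) \<noteq> (\<exists>t\<in>T. E y t)"
  shows "set_dist E x T \<noteq> set_dist E y T"
  using assms set_dist_eq_1_iff by metis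

lemma twin_gdist_le:
  assumes "twins V E a b" "a \<in> V" "x \<in> V" "x \<noteq> a" "x \<noteq> b"
  shows "gdist E b x \<le> gdist E a x"
proof (cases "gdist E a x")
  case 0
  then show ?thesis using gdist_eq_0_iff assms by simp
next
  case (Suc k)
  with reach_gdist[of a x] assms obtain w where w: "E a w" "reach E k w x" by auto
  show ?thesis
  proof (cases "w = b")
    case True
    then show ?thesis using w Suc gdist_le[of k b x] by simp
  next
    case False
    then have "E b w" using w edge_in_V assms(1) unfolding twins_def nbhd_def by blast
    then show ?thesis using w Suc gdist_le[of "Suc k" b x] by auto
  qed
qed

lemma twin_gdist_eq:
  assumes "twins V E a b" "a \<in> V" "b \<in> V" "x \<in> V" "x \<noteq> a" "x \<noteq> b"
  shows "gdist E a x = gdist E b x"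
proof -
  have "twins V E b a" using assms(1) unfolding twins_def by simp
  then show ?thesis using twin_gdist_le assms by (meson antisym)
qed

lemma edge_across:
  assumes "S \<subseteq> V" "x \<in> V - S" "y \<in> S"
  shows "\<exists>a\<in>V - S. \<exists>b\<in>S. E a b"
proof -
  obtain k where "reach E k x y" using reach_exists assms by blast
  then show ?thesis using \<open>x \<in> V - S\<close>
  proof (induction k arbitrary: x)
    case 0
    then show ?case using assms by auto
  next
    case (Suc k)
    then obtain w where "E x w" "reach E k w y" by auto
    then show ?case using Suc edge_in_V by blast
  qed
qed

end

definition part_class :: "'a set set \<Rightarrow> 'a \<Rightarrow> 'a set" where
  "part_class P x = (THE S. S \<in> P \<and> x \<in> S)"

lemma part_class_eq:
  assumes "is_partition V P" "S \<in> P" "x \<in> S"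
  shows "part_class P x = S"
  unfolding part_class_def
  by (rule the_equality) (use assms in \<open>auto simp: is_partition_def\<close>)

lemma part_class:
  assumes "is_partition V P" "x \<in> V"
  shows "part_class P x \<in> P" "x \<in> part_class P x"
proof -
  obtain S where "S \<in> P" "x \<in> S" using assms unfolding is_partition_def by blast
  then show "part_class P x \<in> P" "x \<in> part_class P x" using part_class_eq[OF assms(1)] by simp_all
qed

lemma partition_class_subset: "is_partition V P \<Longrightarrow> S \<in> P \<Longrightarrow> S \<subseteq> V \<and> S \<noteq> {}"
  unfolding is_partition_def by blast

lemma partition_classes_disjoint:
  "is_partition V P \<Longrightarrow> S \<in> P \<Longrightarrow> T \<in> P \<Longrightarrow> x \<in> S \<Longrightarrow> x \<in> T \<Longrightarrow> S = T"
  unfolding is_partition_def by blast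

lemma finite_partition: "finite V \<Longrightarrow> is_partition V P \<Longrightarrow> finite P"
  unfolding is_partition_def by (metis finite_UnionD)

definition pairing_partition :: "'a set \<Rightarrow> 'a set \<Rightarrow> ('a \<Rightarrow> 'a) \<Rightarrow> 'a set set" where
  "pairing_partition V A f = (\<lambda>a. {a, f a}) ` A \<union> (\<lambda>x. {x}) ` (V - (A \<union> f ` A))"

lemma is_partition_pairing_partition:
  assumes "A \<subseteq> V" "f ` A \<subseteq> V - A" "inj_on f A"
  shows "is_partition V (pairing_partition V A f)"
  unfolding is_partition_def
proof (intro conjI ballI impI)
  show "\<Union> (pairing_partition V A f) = V" "{} \<notin> pairing_partition V A f"
    using assms unfolding pairing_partition_def by auto
  fix S T assume "S \<in> pairing_partition V A f" "T \<in> pairing_partition V A f" "S \<noteq> T"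
  then show "S \<inter> T = {}"
    using assms unfolding pairing_partition_def by (auto simp: inj_on_eq_iff)
qed

lemma card_pairing_partition:
  assumes "finite V" "A \<subseteq> V" "f ` A \<subseteq> V - A" "inj_on f A"
  shows "card (pairing_partition V A f) \<le> card V - card A"
proof -
  have fin: "finite A" using assms finite_subset by blast
  have paired: "A \<union> f ` A \<subseteq> V" using assms by blast
  have card_paired: "card (A \<union> f ` A) = 2 * card A"
    using assms card_image[OF assms(4)] by (subst card_Un_disjoint) (auto intro: finite_subset)
  have "card (pairing_partition V A f) \<le> card A + card (V - (A \<union> f ` A))"
    unfolding pairing_partition_def
    by (rule order_trans[OF card_Un_le add_mono[OF card_image_le card_image_le]])
      (use fin assms in auto)
  also have "card (V - (A \<union> f ` A)) = card V - 2 * card A"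
    using card_Diff_subset[OF _ paired] fin card_paired by simp
  finally show ?thesis using card_mono[OF assms(1) paired] card_paired by linarith
qed

lemma pairing_partition_pair: "a \<in> A \<Longrightarrow> {a, f a} \<in> pairing_partition V A f"
  and pairing_partition_singleton:
    "x \<in> V \<Longrightarrow> x \<notin> A \<Longrightarrow> x \<notin> f ` A \<Longrightarrow> {x} \<in> pairing_partition V A f"
  unfolding pairing_partition_def by auto

definition separates_by_adjacency :: "('a \<Rightarrow> 'a \<Rightarrow> bool) \<Rightarrow> 'a set \<Rightarrow> 'a \<Rightarrow> 'a \<Rightarrow> bool" where
  "separates_by_adjacency E T u v \<longleftrightarrow> u \<notin> T \<and> v \<notin> T \<and> (\<exists>t\<in>T. E u t) \<noteq> (\<exists>t\<in>T. E v t)"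

context connected_simple_graph
begin

lemma locating_partitionI:
  assumes P: "is_partition V P"
    and sep: "\<And>S u v. S \<in> P \<Longrightarrow> u \<in> S \<Longrightarrow> v \<in> S \<Longrightarrow> u \<noteq> v \<Longrightarrow>
      \<exists>T\<in>P. separates_by_adjacency E T u v"
  shows "locating_partition V E P"
  unfolding locating_partition_def
proof (intro conjI P ballI impI)
  fix u v assume uv: "u \<in> V" "v \<in> V" "u \<noteq> v"
  let ?S = "part_class P u"
  have S: "?S \<in> P" "u \<in> ?S" "?S \<subseteq> V" "?S \<noteq> {}"
    using part_class[OF P uv(1)] partition_class_subset[OF P] by auto
  show "\<exists>T\<in>P. set_dist E u T \<noteq> set_dist E v T"
  proof (cases "v \<in> ?S")
    case True
    then obtain T where "T \<in> P" "separates_by_adjacency E T u v" using sep S uv by blast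
    then show ?thesis
      using set_dist_differs_if_adjacency_differs uv partition_class_subset[OF P]
      unfolding separates_by_adjacency_def by metis
  next
    case False
    then show ?thesis using S set_dist_eq_0_iff uv by metis
  qed
qed

lemma locating_partition_separates_class:
  assumes P: "locating_partition V E P" and "S \<in> P" "u \<in> S" "v \<in> S" "u \<noteq> v"
  shows "\<exists>T\<in>P. u \<notin> T \<and> v \<notin> T \<and> set_dist E u T \<noteq> set_dist E v T"
proof -
  have part: "is_partition V P" using P unfolding locating_partition_def by blast
  have V: "u \<in> V" "v \<in> V" using partition_class_subset[OF part assms(2)] assms(3,4) by auto
  obtain T where T: "T \<in> P" "set_dist E u T \<noteq> set_dist E v T"
    using P V \<open>u \<noteq> v\<close> unfolding locating_partition_def by blast
  have TV: "T \<subseteq> V" "T \<noteq> {}" using partition_class_subset[OF part T(1)] by auto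
  have "u \<notin> T \<and> v \<notin> T"
  proof (rule ccontr)
    assume "\<not> (u \<notin> T \<and> v \<notin> T)"
    then have "u \<in> T" "v \<in> T" using partition_classes_disjoint[OF part assms(2) T(1)] assms(3,4) by blast+
    then show False using set_dist_eq_0_iff[OF V(1) TV] set_dist_eq_0_iff[OF V(2) TV] T(2) by simp
  qed
  then show ?thesis using T by blast
qed

lemma locating_pairing_partitionI:
  assumes "A \<subseteq> V" "f ` A \<subseteq> V - A" "inj_on f A"
    and "\<forall>a\<in>A. \<exists>T\<in>pairing_partition V A f. separates_by_adjacency E T a (f a)"
  shows "locating_partition V E (pairing_partition V A f)"
proof (rule locating_partitionI[OF is_partition_pairing_partition[OF assms(1-3)]])
  fix S u v assume "S \<in> pairing_partition V A f" "u \<in> S" "v \<in> S" "u \<noteq> v"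
  then obtain a where "a \<in> A" "(u = a \<and> v = f a) \<or> (u = f a \<and> v = a)"
    unfolding pairing_partition_def by auto
  then show "\<exists>T\<in>pairing_partition V A f. separates_by_adjacency E T u v"
    using assms(4) unfolding separates_by_adjacency_def by metis
qed

end

lemma inj_into_larger_set:
  assumes "finite A" "finite B" "card A < card B"
  obtains f b where "inj_on f A" "f ` A \<subseteq> B" "b \<in> B" "b \<notin> f ` A"
proof -
  obtain f where f: "inj_on f A" "f ` A \<subseteq> B"
    using card_le_inj[OF assms(1,2)] assms(3) by (metis less_imp_le)
  have "f ` A \<noteq> B" using card_image[OF f(1)] assms(3) by auto
  then show ?thesis using that f by blast
qed

definition dominates :: "('a \<Rightarrow> 'a \<Rightarrow> bool) \<Rightarrow> 'a set \<Rightarrow> 'a set \<Rightarrow> bool" where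
  "dominates H U D \<longleftrightarrow> (\<forall>u\<in>U - D. \<exists>z\<in>D. H u z)"

text \<open>Ore's argument: the complement of a minimum dominating set is again dominating.\<close>

lemma small_dominating_set:
  assumes "finite X" "U \<subseteq> X"
    and witness: "\<And>u. u \<in> U \<Longrightarrow> \<exists>z\<in>X. H u z"
    and irrefl: "\<And>u. \<not> H u u"
    and sym: "\<And>u v. u \<in> U \<Longrightarrow> v \<in> U \<Longrightarrow> H u v \<Longrightarrow> H v u"
  shows "\<exists>D\<subseteq>X. 2 * card D \<le> card X \<and> dominates H U D"
proof -
  let ?Dom = "\<lambda>D. D \<subseteq> X \<and> dominates H U D"
  have "?Dom X" using assms(2) unfolding dominates_def by blast
  then obtain D where D: "?Dom D" and min: "\<And>D'. ?Dom D' \<Longrightarrow> card D \<le> card D'"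
    using ex_has_least_nat[of ?Dom X card] by blast
  have finD: "finite D" using D assms(1) finite_subset by blast
  have "dominates H U (X - D)"
    unfolding dominates_def
  proof
    fix u assume u: "u \<in> U - (X - D)"
    then have uD: "u \<in> D" "u \<in> U" using assms(2) by auto
    show "\<exists>z\<in>X - D. H u z"
    proof (rule ccontr)
      assume none: "\<not> (\<exists>z\<in>X - D. H u z)"
      have "dominates H U (D - {u})"
        unfolding dominates_def
      proof
        fix v assume v: "v \<in> U - (D - {u})"
        show "\<exists>z\<in>D - {u}. H v z"
        proof (cases "v = u")
          case True
          then show ?thesis using witness[OF uD(2)] none irrefl by blast
        next
          case False
          then obtain z where z: "z \<in> D" "H v z" using D v unfolding dominates_def by blast
          have "v \<in> X - D" using v False assms(2) by blast
          then have "z \<noteq> u" using none sym[OF _ uD(2)] v z(2) by blast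
          then show ?thesis using z by blast
        qed
      qed
      then have "card D \<le> card (D - {u})" using min D by blast
      then show False using card_Diff1_less[OF finD uD(1)] by simp
    qed
  qed
  moreover have "card (X - D) = card X - card D" using card_Diff_subset[OF finD] D by blast
  moreover have "card D \<le> card X" using card_mono[OF assms(1)] D by blast
  ultimately have "2 * card D \<le> card X \<or> 2 * card (X - D) \<le> card X" by linarith
  then show ?thesis using D \<open>dominates H U (X - D)\<close> by blast
qed

locale twin_set = connected_simple_graph +
  fixes W :: "'a set"
  assumes W_subset: "W \<subseteq> V"
    and W_twins: "u \<in> W \<Longrightarrow> v \<in> W \<Longrightarrow> twins V E u v"
begin

lemma finite_W: "finite W"
  using W_subset finite_V finite_subset by blast

lemma adjacent_all_twins:
  assumes "x \<in> V - W" "w \<in> W" "w' \<in> W" "E x w"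
  shows "E x w'"
proof (cases "w = w'")
  case False
  then have "x \<in> nbhd V E w - {w'}" using assms edge_sym unfolding nbhd_def by auto
  then show ?thesis using W_twins[OF assms(2,3)] edge_sym unfolding twins_def nbhd_def by auto
qed (use assms in simp)

lemma twin_set_edge_transfer:
  assumes "a \<in> W" "b \<in> W" "c \<in> W" "E a b" "c \<noteq> a" "c \<noteq> b"
  shows "E c b"
proof -
  have "b \<in> nbhd V E a - {c}" using assms edge_in_V unfolding nbhd_def by auto
  then show ?thesis using W_twins[OF assms(1,3)] unfolding twins_def nbhd_def by auto
qed

lemma twin_set_complete_or_independent: "complete_on E W \<or> (\<forall>a\<in>W. \<forall>b\<in>W. \<not> E a b)"
proof (rule disjCI)
  assume "\<not> (\<forall>a\<in>W. \<forall>b\<in>W. \<not> E a b)"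
  then obtain a b where ab: "a \<in> W" "b \<in> W" "E a b" by blast
  have to_b: "E x b" if "x \<in> W" "x \<noteq> b" for x
    using twin_set_edge_transfer[OF ab(1,2) that(1) ab(3)] ab that by (cases "x = a") auto
  show "complete_on E W" unfolding complete_on_def
  proof (intro ballI impI)
    fix x y assume xy: "x \<in> W" "y \<in> W" "x \<noteq> y"
    consider "x = b" | "y = b" | "x \<noteq> b" "y \<noteq> b" by blast
    then show "E x y"
    proof cases
      case 3
      then show ?thesis
        using twin_set_edge_transfer[OF ab(2) xy(1,2) edge_sym[OF to_b]] xy edge_sym by blast
    qed (use to_b xy edge_sym in auto)
  qed
qed

lemma twin_set_meets_class_once:
  assumes P: "locating_partition V E P" and "S \<in> P" "a \<in> S" "b \<in> S" "a \<in> W" "b \<in> W"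
  shows "a = b"
proof (rule ccontr)
  assume "a \<noteq> b"
  have part: "is_partition V P" using P unfolding locating_partition_def by blast
  have V: "a \<in> V" "b \<in> V" using assms W_subset by auto
  obtain T where T: "T \<in> P" "a \<notin> T" "b \<notin> T" "set_dist E a T \<noteq> set_dist E b T"
    using locating_partition_separates_class[OF P assms(2-4) \<open>a \<noteq> b\<close>] by blast
  have "gdist E a ` T = gdist E b ` T"
    using twin_gdist_eq[OF W_twins[OF assms(5,6)]] V T(2,3) partition_class_subset[OF part T(1)]
    by (intro image_cong) auto
  then show False using T(4) unfolding set_dist_def by simp
qed

lemma part_class_inj_on_twin_set:
  assumes "locating_partition V E P"
  shows "inj_on (part_class P) W"
proof (rule inj_onI)
  fix a b assume "a \<in> W" "b \<in> W" "part_class P a = part_class P b"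
  moreover have part: "is_partition V P" using assms unfolding locating_partition_def by blast
  ultimately show "a = b"
    using twin_set_meets_class_once[OF assms] part_class[OF part] W_subset by (metis subsetD)
qed

lemma card_twin_set_le_locating_partition:
  assumes "locating_partition V E P"
  shows "card W \<le> card P"
proof (rule card_inj_on_le[OF part_class_inj_on_twin_set[OF assms]])
  have part: "is_partition V P" using assms unfolding locating_partition_def by blast
  show "part_class P ` W \<subseteq> P" using part_class(1)[OF part] W_subset by blast
  show "finite P" using finite_partition[OF finite_V part] .
qed

text \<open>If a clique of twins had exactly one vertex in every class, a neighbour x outside it would
  have the same distance vector as the twin in its own class: distance 0 to that class and 1 to
  all others.\<close>

lemma card_twin_set_less_locating_partition:
  assumes P: "locating_partition V E P" and complete: "complete_on E W"
    and x: "x \<in> V - W" "w \<in> W" "E x w"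
  shows "card W < card P"
proof (rule ccontr)
  assume "\<not> card W < card P"
  have part: "is_partition V P" using P unfolding locating_partition_def by blast
  have sub: "part_class P ` W \<subseteq> P" using part_class(1)[OF part] W_subset by blast
  have onto: "part_class P ` W = P"
    using card_seteq[OF finite_partition[OF finite_V part] sub]
      card_image[OF part_class_inj_on_twin_set[OF P]]
      card_twin_set_le_locating_partition[OF P] \<open>\<not> card W < card P\<close> by simp
  have "part_class P x \<in> part_class P ` W" using part_class(1)[OF part] x(1) onto by simp
  then obtain wx where wx: "wx \<in> W" "part_class P x = part_class P wx" by blast
  have V: "x \<in> V" "wx \<in> V" using x wx W_subset by auto
  have "wx \<in> part_class P x" using part_class(2)[OF part V(2)] wx(2) by simp
  then obtain T where T: "T \<in> P" "x \<notin> T" "wx \<notin> T" "set_dist E x T \<noteq> set_dist E wx T"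
    using locating_partition_separates_class[OF P part_class[OF part V(1)]] x wx(1) by blast
  obtain wT where wT: "wT \<in> W" "T = part_class P wT" using onto T(1) by blast
  have "wT \<in> T" using wT part_class(2)[OF part] W_subset by blast
  then have "wx \<noteq> wT" using T(3) by blast
  then have "E wx wT" using complete wx(1) wT(1) unfolding complete_on_def by blast
  then have "\<exists>t\<in>T. E x t" "\<exists>t\<in>T. E wx t"
    using adjacent_all_twins[OF x(1,2) wT(1) x(3)] \<open>wT \<in> T\<close> by blast+
  then show False
    using set_dist_eq_1_iff[OF V(1) _ _ T(2)] set_dist_eq_1_iff[OF V(2) _ _ T(3)] T(4)
      partition_class_subset[OF part T(1)] by simp
qed

end

locale maximum_twin_set = twin_set +
  assumes W_maximum: "x \<in> V \<Longrightarrow> card (twin_class V E x) \<le> card W"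
begin

lemma no_twin_outside:
  assumes "u \<in> V - W" "w \<in> W"
  shows "\<not> twins V E w u"
proof
  assume "twins V E w u"
  then have "insert u W \<subseteq> twin_class V E w"
    using assms W_twins W_subset unfolding twin_class_def by auto
  then have "card (insert u W) \<le> card (twin_class V E w)"
    using finite_V by (intro card_mono) (auto simp: twin_class_def)
  then show False using W_maximum[of w] assms W_subset finite_W by auto
qed

text \<open>Outside W, adjacency to w is adjacency to W; so a vertex u outside W that matched w on W
  and matched adjacency to W outside W would be a twin of w.\<close>

lemma outside_vertex_distinguished:
  assumes u: "u \<in> V - W" and w: "w \<in> W"
  shows "(\<exists>y\<in>W - {w}. E u y \<noteq> E w y) \<or> (\<exists>z\<in>V - W - {u}. E u z \<noteq> (\<exists>w'\<in>W. E z w'))"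
proof (rule ccontr)
  assume "\<not> ?thesis"
  then have inside: "\<And>y. y \<in> W - {w} \<Longrightarrow> E u y = E w y"
    and outside: "\<And>z. z \<in> V - W - {u} \<Longrightarrow> E u z = (\<exists>w'\<in>W. E z w')" by blast+
  have "E w y \<longleftrightarrow> E u y" if "y \<in> V" "y \<noteq> u" "y \<noteq> w" for y
  proof (cases "y \<in> W")
    case True
    then show ?thesis using inside that by blast
  next
    case False
    then have "E w y \<longleftrightarrow> (\<exists>w'\<in>W. E y w')"
      using adjacent_all_twins[of y _ w] that w edge_sym by blast
    then show ?thesis using outside that False by blast
  qed
  then have "twins V E w u" unfolding twins_def nbhd_def using no_loop by blast
  then show False using no_twin_outside u w by blast
qed

text \<open>Pair every outside vertex u with a twin f u; the unused twin ws, or else the pair of a vertex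
  z distinguishing u from its twin, separates u from f u.\<close>

lemma locating_partition_independent_twin_set:
  assumes independent: "\<forall>a\<in>W. \<forall>b\<in>W. \<not> E a b" and small: "card (V - W) < card W"
  shows "\<exists>P. locating_partition V E P \<and> card P \<le> card W"
proof -
  obtain f ws where f: "inj_on f (V - W)" "f ` (V - W) \<subseteq> W" and ws: "ws \<in> W" "ws \<notin> f ` (V - W)"
    using inj_into_larger_set[OF finite_Diff[OF finite_V] finite_W small] by blast
  let ?P = "pairing_partition V (V - W) f"
  have fV: "f ` (V - W) \<subseteq> V - (V - W)" using f(2) W_subset by blast
  have sep: "\<exists>T\<in>?P. separates_by_adjacency E T u (f u)" if u: "u \<in> V - W" for u
  proof -
    have fu: "f u \<in> W" using f(2) u by blast
    show ?thesis
    proof (cases "\<exists>w\<in>W. E u w")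
      case True
      have "{ws} \<in> ?P" using ws W_subset by (intro pairing_partition_singleton) auto
      moreover have "E u ws" using True adjacent_all_twins u ws(1) by blast
      moreover have "\<not> E (f u) ws" using independent fu ws(1) by blast
      ultimately show ?thesis using u ws fu unfolding separates_by_adjacency_def
        by (intro bexI[of _ "{ws}"]) auto
    next
      case False
      then obtain z where z: "z \<in> V - W" "z \<noteq> u" "E u z \<noteq> (\<exists>w\<in>W. E z w)"
        using outside_vertex_distinguished[OF u fu] independent fu by blast
      have fz: "f z \<in> W" "f z \<noteq> f u" using f z u by (auto simp: inj_on_eq_iff)
      have "{z, f z} \<in> ?P" using z(1) by (rule pairing_partition_pair)
      moreover have "(\<exists>t\<in>{z, f z}. E u t) = E u z" using False fz by blast
      moreover have "(\<exists>t\<in>{z, f z}. E (f u) t) = (\<exists>w\<in>W. E z w)"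
        using independent fu fz adjacent_all_twins[OF z(1) _ fu] edge_sym by blast
      ultimately show ?thesis
        using z u fu fz unfolding separates_by_adjacency_def by (intro bexI[of _ "{z, f z}"]) auto
    qed
  qed
  have "locating_partition V E ?P"
    using locating_pairing_partitionI[OF _ fV f(1)] sep by blast
  moreover have "card ?P \<le> card W"
    using card_pairing_partition[OF finite_V _ fV f(1)] card_Diff_subset[OF finite_W W_subset]
      card_mono[OF finite_V W_subset] by simp
  ultimately show ?thesis by blast
qed

text \<open>Every outside vertex u that sees W differs from W in its adjacency to some other outside
  vertex z. Such witnesses z form a dominating set of at most half the outside vertices; they are
  kept as singletons and the remaining outside vertices are paired with W.\<close>

lemma locating_partition_complete_twin_set:
  assumes complete: "complete_on E W" and small: "card (V - W) < card W"
  shows "\<exists>P. locating_partition V E P \<and> 2 * card P \<le> card (V - W) + 2 * card W"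
proof -
  define U where "U = {u \<in> V - W. \<exists>w\<in>W. E u w}"
  define H where "H u z \<longleftrightarrow> z \<noteq> u \<and> E u z \<noteq> (\<exists>w\<in>W. E z w)" for u z
  have "W \<noteq> {}" using small by (intro notI) simp
  then obtain w0 where w0: "w0 \<in> W" by blast
  have witness: "\<exists>z\<in>V - W. H u z" if u: "u \<in> U" for u
  proof -
    obtain w where w: "u \<in> V - W" "w \<in> W" "E u w" using u unfolding U_def by blast
    have "E u y \<and> E w0 y" if "y \<in> W - {w0}" for y
      using adjacent_all_twins[OF w(1,2) _ w(3)] complete w0 that unfolding complete_on_def by auto
    then show ?thesis using outside_vertex_distinguished[OF w(1) w0] unfolding H_def by auto
  qed
  have "H u v \<Longrightarrow> H v u" if "u \<in> U" "v \<in> U" for u v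
    using that edge_sym unfolding U_def H_def by blast
  then obtain Z where Z: "Z \<subseteq> V - W" "2 * card Z \<le> card (V - W)" "dominates H U Z"
    using small_dominating_set[of "V - W" U H] witness finite_V unfolding U_def H_def by blast
  let ?A = "V - W - Z"
  have "card ?A \<le> card (V - W)" using finite_V by (intro card_mono) auto
  then have "card ?A < card W" using small by linarith
  moreover have "finite ?A" using finite_V by simp
  ultimately obtain f ws where f: "inj_on f ?A" "f ` ?A \<subseteq> W" and ws: "ws \<in> W" "ws \<notin> f ` ?A"
    using inj_into_larger_set[OF _ finite_W] by blast
  let ?P = "pairing_partition V ?A f"
  have AV: "?A \<subseteq> V" by blast
  have fV: "f ` ?A \<subseteq> V - ?A" using f(2) W_subset by blast
  have sep: "\<exists>T\<in>?P. separates_by_adjacency E T u (f u)" if u: "u \<in> ?A" for u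
  proof -
    have fu: "f u \<in> W" using f(2) u by blast
    show ?thesis
    proof (cases "u \<in> U")
      case True
      then obtain z where z: "z \<in> Z" "H u z" using Z(3) u unfolding dominates_def by blast
      have zV: "z \<in> V - W" using z Z(1) by blast
      have "{z} \<in> ?P" using zV z(1) f(2) by (intro pairing_partition_singleton) auto
      moreover have "E (f u) z = (\<exists>w\<in>W. E z w)"
        using adjacent_all_twins[OF zV _ fu] edge_sym fu by blast
      ultimately show ?thesis using z(2) zV fu unfolding H_def separates_by_adjacency_def
        by (intro bexI[of _ "{z}"]) auto
    next
      case False
      have "{ws} \<in> ?P" using ws W_subset by (intro pairing_partition_singleton) auto
      moreover have "\<not> E u ws" using False u ws(1) unfolding U_def by blast
      moreover have "f u \<noteq> ws" using ws(2) u by blast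
      then have "E (f u) ws" using complete fu ws(1) unfolding complete_on_def by blast
      ultimately show ?thesis using u ws fu unfolding separates_by_adjacency_def
        by (intro bexI[of _ "{ws}"]) auto
    qed
  qed
  have "locating_partition V E ?P"
    using locating_pairing_partitionI[OF AV fV f(1)] sep by blast
  moreover have "card ?P \<le> card W + card Z"
  proof -
    have "finite Z" using Z(1) finite_V finite_subset by blast
    then have "card ?A = card (V - W) - card Z" using Z(1) by (simp add: card_Diff_subset)
    moreover have "card (V - W) = card V - card W" using card_Diff_subset[OF finite_W W_subset] .
    moreover have "card W \<le> card V" using card_mono[OF finite_V W_subset] .
    moreover have "card Z \<le> card (V - W)" using card_mono[OF _ Z(1)] finite_V by blast
    ultimately show ?thesis using card_pairing_partition[OF finite_V AV fV f(1)] by linarith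
  qed
  ultimately show ?thesis using Z(2) by (intro exI[of _ ?P]) auto
qed

lemma partition_dimension_complete_twin_set:
  assumes complete: "complete_on E W" and not_complete: "\<not> complete_on E V"
    and large: "card V < 2 * card W"
  shows "card W < partition_dimension V E \<and> 2 * partition_dimension V E \<le> card V + card W"
proof -
  have card_outside: "card (V - W) = card V - card W"
    using card_Diff_subset[OF finite_W W_subset] .
  then have small: "card (V - W) < card W" using large by linarith
  obtain P where P: "locating_partition V E P" "2 * card P \<le> card (V - W) + 2 * card W"
    using locating_partition_complete_twin_set[OF complete small] by blast
  obtain Q where Q: "locating_partition V E Q" "card Q = partition_dimension V E"
    using partition_dimension_attained[OF P(1)] by blast
  have "V \<noteq> W" using complete not_complete by blast
  then obtain x where "x \<in> V - W" using W_subset by blast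
  moreover obtain w where "w \<in> W" using small by (metis all_not_in_conv card.empty not_less0)
  ultimately obtain a b where "a \<in> V - W" "b \<in> W" "E a b" using edge_across[OF W_subset] by blast
  then have "card W < partition_dimension V E"
    using card_twin_set_less_locating_partition[OF Q(1) complete] Q(2) by metis
  moreover have "2 * partition_dimension V E \<le> card V + card W"
    using partition_dimension_le[OF P(1)] P(2) card_outside card_mono[OF finite_V W_subset] by linarith
  ultimately show ?thesis ..
qed

lemma partition_dimension_independent_twin_set:
  assumes "\<not> complete_on E W" and large: "card V < 2 * card W"
  shows "partition_dimension V E \<le> card W"
proof -
  have "card (V - W) < card W" using card_Diff_subset[OF finite_W W_subset] large by linarith
  then obtain P where "locating_partition V E P" "card P \<le> card W"
    using locating_partition_independent_twin_set twin_set_complete_or_independent assms(1) by blast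
  then show ?thesis using partition_dimension_le by (metis le_trans)
qed

end

lemma maximum_twin_set_if_tau_set:
  assumes "connected_graph V E" "tau_set V E W"
  shows "maximum_twin_set V E W"
proof -
  interpret connected_simple_graph V E using assms(1) by unfold_locales
  show ?thesis
  proof (unfold_locales)
    show "W \<subseteq> V" "\<And>u v. u \<in> W \<Longrightarrow> v \<in> W \<Longrightarrow> twins V E u v"
      using assms(2) unfolding tau_set_def by auto
    show "card (twin_class V E x) \<le> card W" if "x \<in> V" for x
      using assms(2) finite_V that unfolding tau_set_def twin_number_def by (auto intro: Max_ge)
  qed
qed

theorem corollary19:
  fixes V :: "'a set" and E :: "'a \<Rightarrow> 'a \<Rightarrow> bool" and h :: int and W :: "'a set"
  assumes "connected_graph V E"
    and "card V \<ge> 2"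
    and "\<not> complete_on E V"
    and "int (partition_dimension V E) = int (card V) - h"
    and "2 * twin_number V E > card V"
    and "tau_set V E W"
  shows "(int (card V) - 2 * h \<le> int (twin_number V E)
            \<and> int (twin_number V E) \<le> int (card V) - h - 1)
         \<longleftrightarrow> complete_on E W"
proof -
  interpret maximum_twin_set V E W using maximum_twin_set_if_tau_set assms(1,6) .
  have tau: "twin_number V E = card W" using assms(6) unfolding tau_set_def by simp
  show ?thesis
  proof (cases "complete_on E W")
    case True
    then show ?thesis
      using partition_dimension_complete_twin_set[OF _ assms(3)] assms(4,5) tau by fastforce
  next
    case False
    then show ?thesis
      using partition_dimension_independent_twin_set assms(4,5) tau by fastforce
  qed
qed

end
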